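(* Let $R$ be an integral domain with quotient field $K$. Let $B=\bigcup_{0\ne a\in R}R[[t/a]]$, the union taken inside $K((t))$, where $R[[t/a]]=\{\sum_{n\ge0}c_n(t/a)^n : c_n\in R\}$, and let $F=\operatorname{Quot}(B)\subseteq K((t))$. Then $F$ is separably closed in $K((t))$. *)

theory Defs
  imports "HOL-Computational_Algebra.Formal_Laurent_Series"
          "HOL-Computational_Algebra.Fraction_Field"
          "HOL-Computational_Algebra.Polynomial"
begin

text \<open>R is the integral domain given by the type 'a; K = Quot(R) is 'a fract;
  K((t)) is 'a fract fls.  R is embedded into K via r |-> Fract r 1.\<close>

definition power_series_t_over :: "'a::idom \<Rightarrow> 'a fract fls set" where
  "power_series_t_over a =
     {f. \<exists>c :: nat \<Rightarrow> 'a. \<forall>n::int. fls_nth f n =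
        (if n < 0 then 0 else Fract (c (nat n)) 1 / (Fract a 1) ^ (nat n))}"

definition ring_B :: "'a::idom fract fls set" where
  "ring_B = (\<Union>a\<in>{a::'a. a \<noteq> 0}. power_series_t_over a)"

definition field_F :: "'a::idom fract fls set" where
  "field_F = {x / y | x y. x \<in> ring_B \<and> y \<in> ring_B \<and> y \<noteq> 0}"

text \<open>A polynomial with coefficients in a subfield F is separable iff it is coprime
  to its derivative in F[X] (Bezout identity with coefficients in F).\<close>
definition separable_poly_over :: "'b::field set \<Rightarrow> 'b poly \<Rightarrow> bool" where
  "separable_poly_over F p \<longleftrightarrow>
     (\<exists>u v. set (coeffs u) \<subseteq> F \<and> set (coeffs v) \<subseteq> F \<and> u * p + v * pderiv p = 1)"

definition separable_algebraic_over :: "'b::field set \<Rightarrow> 'b \<Rightarrow> bool" where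
  "separable_algebraic_over F x \<longleftrightarrow>
     (\<exists>p. p \<noteq> 0 \<and> set (coeffs p) \<subseteq> F \<and> separable_poly_over F p \<and> poly p x = 0)"

definition separably_closed_in :: "'b::field set \<Rightarrow> 'b set \<Rightarrow> bool" where
  "separably_closed_in F L \<longleftrightarrow> (\<forall>x\<in>L. separable_algebraic_over F x \<longrightarrow> x \<in> F)"

end

theory Submission
  imports Defs
begin

(* For 0 \<noteq> v \<in> R say that g \<in> K[[t]] has denominator bound (v,k) if v^(n+k) g_n \<in> R for
   every n, i.e. g \<in> v^-k R[[t/v]].

   The heart of the argument is a Hensel-type statement: a simple root y \<in> K[[t]] of a
   polynomial with coefficients in R[[t/v]] has a denominator bound (rho,1), rho \<noteq> 0.
   Truncating y below N = 1 + ord_t p'(y) and expanding p around the truncation turns the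
   tail z of y into a solution of a fixed point equation c z = A + t \<Psi>(z).  Coefficient n
   of the right hand side depends only on the coefficients of z below n, so strong
   induction on n bounds the denominators of z (sections on causal fixed points and on
   simple roots).

   Finally, a Laurent series x that is a simple root of a polynomial over F becomes, after
   clearing the denominators of the coefficients (in B, then in a common R[[t/nu]]) and
   multiplying x by a power of t, a simple power series root as above; hence x is a
   quotient of two elements of B (last three sections). *)

section \<open>The subring R of K\<close>

definition in_R :: "'a::idom fract \<Rightarrow> bool" where
  "in_R z \<longleftrightarrow> (\<exists>r. z = Fract r 1)"

lemma in_R_Fract [simp, intro]: "in_R (Fract r 1)"
  by (auto simp: in_R_def)

lemma in_R_0 [simp, intro]: "in_R 0"
  by (metis in_R_Fract fract_collapse(1))

lemma in_R_1 [simp, intro]: "in_R 1"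
  by (metis in_R_Fract fract_collapse(2))

lemma in_R_add [intro]: "in_R a \<Longrightarrow> in_R b \<Longrightarrow> in_R (a + b)"
  by (auto simp: in_R_def)

lemma in_R_mult [intro]: "in_R a \<Longrightarrow> in_R b \<Longrightarrow> in_R (a * b)"
  by (auto simp: in_R_def)

lemma in_R_uminus [intro]: "in_R a \<Longrightarrow> in_R (- a)"
  by (auto simp: in_R_def)

lemma in_R_power [intro]: "in_R a \<Longrightarrow> in_R (a ^ n)"
  by (induction n) auto

lemma in_R_sum [intro]: "(\<And>i. i \<in> A \<Longrightarrow> in_R (f i)) \<Longrightarrow> in_R (sum f A)"
  by (induction A rule: infinite_finite_induct) auto

lemma Fract_power: "Fract a b ^ n = Fract (a ^ n) (b ^ n)"
  by (induction n) (auto simp: fract_collapse)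

lemma Fract_power_nonzero: "v \<noteq> 0 \<Longrightarrow> Fract (v::'a::idom) 1 ^ n \<noteq> 0"
proof -
  assume "v \<noteq> 0"
  then have "Fract v 1 \<noteq> 0" by (simp add: eq_fract Zero_fract_def)
  then show ?thesis by simp
qed

section \<open>Denominator bounds of power series\<close>

text \<open>\<open>denom_bound v k g\<close>: the series g lies in v^-k R[[t/v]].\<close>
definition denom_bound :: "'a::idom \<Rightarrow> nat \<Rightarrow> 'a fract fps \<Rightarrow> bool" where
  "denom_bound v k g \<longleftrightarrow> (\<forall>n. in_R (g $ n * Fract v 1 ^ (n + k)))"

lemma denom_bound_0 [simp]: "denom_bound v k 0"
  by (simp add: denom_bound_def)

lemma denom_bound_1 [simp]: "denom_bound v k 1"
  by (auto simp: denom_bound_def fps_one_nth intro!: in_R_power)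

lemma denom_bound_const [simp]: "denom_bound v k (fps_const (Fract r 1))"
  by (auto simp: denom_bound_def intro!: in_R_mult in_R_power)

lemma denom_bound_X [simp]: "denom_bound v k fps_X"
  by (auto simp: denom_bound_def fps_X_def intro!: in_R_power)

lemma denom_bound_add [intro]:
  "denom_bound v k f \<Longrightarrow> denom_bound v k g \<Longrightarrow> denom_bound v k (f + g)"
  by (auto simp: denom_bound_def distrib_right)

lemma denom_bound_uminus [intro]: "denom_bound v k f \<Longrightarrow> denom_bound v k (- f)"
  by (auto simp: denom_bound_def)

lemma denom_bound_mult:
  assumes "denom_bound v k f" "denom_bound v l g"
  shows "denom_bound v (k + l) (f * g)"
  unfolding denom_bound_def
proof
  fix n
  have "(f * g) $ n * Fract v 1 ^ (n + (k + l)) =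
        (\<Sum>i=0..n. (f $ i * Fract v 1 ^ (i + k)) * (g $ (n - i) * Fract v 1 ^ ((n - i) + l)))"
    unfolding fps_mult_nth sum_distrib_right
  proof (rule sum.cong[OF refl])
    fix i assume "i \<in> {0..n}"
    then have "n + (k + l) = (i + k) + ((n - i) + l)" by simp
    then have "Fract v 1 ^ (n + (k + l)) = Fract v 1 ^ (i + k) * Fract v 1 ^ ((n - i) + l)"
      by (metis power_add)
    then show "f $ i * g $ (n - i) * Fract v 1 ^ (n + (k + l)) =
       f $ i * Fract v 1 ^ (i + k) * (g $ (n - i) * Fract v 1 ^ (n - i + l))"
      by (simp add: mult_ac)
  qed
  also have "in_R \<dots>"
    using assms unfolding denom_bound_def by blast
  finally show "in_R ((f * g) $ n * Fract v 1 ^ (n + (k + l)))" .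
qed

lemma denom_bound_power: "denom_bound v 0 f \<Longrightarrow> denom_bound v 0 (f ^ n)"
proof (induction n)
  case (Suc n)
  then show ?case using denom_bound_mult[of v 0 f 0 "f ^ n"] by simp
qed simp

lemma denom_bound_mono:
  assumes "denom_bound v k f" "k \<le> l"
  shows "denom_bound v l f"
  unfolding denom_bound_def
proof
  fix n
  have "n + l = (n + k) + (l - k)" using assms(2) by simp
  then have "Fract v 1 ^ (n + l) = Fract v 1 ^ (n + k) * Fract v 1 ^ (l - k)"
    by (metis power_add)
  then have "f $ n * Fract v 1 ^ (n + l) = (f $ n * Fract v 1 ^ (n + k)) * Fract v 1 ^ (l - k)"
    by (simp add: mult.assoc)
  also have "in_R \<dots>"
    using assms(1) unfolding denom_bound_def by blast
  finally show "in_R (f $ n * Fract v 1 ^ (n + l))" .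
qed

lemma denom_bound_base:
  assumes "denom_bound v k f"
  shows "denom_bound (v * w) k f"
  unfolding denom_bound_def
proof
  fix n
  have "Fract (v * w) 1 = Fract v 1 * Fract w 1" by simp
  then have "f $ n * Fract (v * w) 1 ^ (n + k) = (f $ n * Fract v 1 ^ (n + k)) * Fract w 1 ^ (n + k)"
    by (simp only: power_mult_distrib mult.assoc)
  also have "in_R \<dots>"
    using assms unfolding denom_bound_def by blast
  finally show "in_R (f $ n * Fract (v * w) 1 ^ (n + k))" .
qed

lemma denom_bound_shift: "denom_bound v k f \<Longrightarrow> denom_bound v (k + j) (fps_shift j f)"
  unfolding denom_bound_def by (metis fps_shift_nth add.assoc add.commute)

lemma denom_bound_X_mult:
  assumes "denom_bound v (Suc k) f"
  shows "denom_bound v k (fps_X * f)"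
  unfolding denom_bound_def
proof
  fix n
  show "in_R ((fps_X * f) $ n * Fract v 1 ^ (n + k))"
  proof (cases n)
    case (Suc m)
    then have "(fps_X * f) $ n * Fract v 1 ^ (n + k) = f $ m * Fract v 1 ^ (m + Suc k)"
      by simp
    then show ?thesis using assms unfolding denom_bound_def by metis
  qed simp
qed

lemma denom_bound_scale: "denom_bound v k f \<Longrightarrow> denom_bound v 0 (fps_const (Fract v 1 ^ k) * f)"
  by (auto simp: denom_bound_def mult_ac power_add)

lemma denom_bound_const_mult: "denom_bound v k f \<Longrightarrow> denom_bound v k (fps_const (Fract r 1) * f)"
  by (auto simp: denom_bound_def mult.assoc)

lemma denom_bound_unscale:
  assumes "denom_bound v 0 (fps_const (Fract c 1) * z)"
  shows "denom_bound (v * c) 1 z"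
  unfolding denom_bound_def
proof
  fix n
  have "Fract (v * c) 1 = Fract v 1 * Fract c 1" by simp
  then have "z $ n * Fract (v * c) 1 ^ (n + 1) =
        (Fract c 1 * z $ n * Fract v 1 ^ n) * (Fract v 1 * Fract c 1 ^ n)"
    by (simp only: power_mult_distrib power_add power_one_right mult_ac)
  also have "in_R \<dots>"
    using assms unfolding denom_bound_def
    by (intro in_R_mult[OF _ in_R_mult[OF in_R_Fract in_R_power[OF in_R_Fract]]]) simp
  finally show "in_R (z $ n * Fract (v * c) 1 ^ (n + 1))" .
qed

text \<open>Dividing the j-th coefficient of a polynomial of degree D by c^j.\<close>
lemma denom_bound_divide_power:
  assumes "denom_bound v 0 f" "j \<le> D" "c \<noteq> 0"
  shows "denom_bound (v * c ^ D) 1 (fps_const (inverse (Fract c 1) ^ j) * f)"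
  unfolding denom_bound_def
proof
  fix n
  define C V where "C = Fract c 1" and "V = Fract v 1"
  have "C ^ D = C ^ j * C ^ (D - j)"
    using assms(2) by (metis le_add_diff_inverse power_add)
  moreover have "C ^ j \<noteq> 0" unfolding C_def by (rule Fract_power_nonzero[OF assms(3)])
  ultimately have cancel: "inverse C ^ j * C ^ D = C ^ (D - j)"
    by (simp add: power_inverse mult.assoc[symmetric])
  have "Fract (v * c ^ D) 1 = V * C ^ D"
    by (simp add: C_def V_def Fract_power)
  then have "inverse C ^ j * f $ n * Fract (v * c ^ D) 1 ^ (n + 1) =
        (f $ n * V ^ n) * (C ^ D) ^ n * V * (inverse C ^ j * C ^ D)"
    by (simp add: power_mult_distrib mult_ac)
  also have "\<dots> = (f $ n * V ^ n) * (C ^ D) ^ n * V * C ^ (D - j)"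
    by (simp only: cancel)
  also have "in_R \<dots>"
  proof -
    have "in_R (f $ n * V ^ n)" using assms(1) unfolding denom_bound_def V_def by simp
    then show ?thesis unfolding C_def V_def
      by (intro in_R_mult[OF in_R_mult[OF in_R_mult]] in_R_power[OF in_R_power] in_R_power in_R_Fract)
  qed
  finally show "in_R ((fps_const (inverse (Fract c 1) ^ j) * f) $ n * Fract (v * c ^ D) 1 ^ (n + 1))"
    by (simp add: C_def)
qed

lemma denom_bound_finite_support:
  fixes a :: "'a::idom fract fps"
  assumes "\<And>i. i \<ge> N \<Longrightarrow> a $ i = 0"
  shows "\<exists>v. v \<noteq> 0 \<and> denom_bound v 1 a"
proof -
  have "\<exists>d. d \<noteq> 0 \<and> in_R (a $ i * Fract d 1)" for i
  proof (cases "a $ i")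
    case (Fract r s)
    then have "a $ i * Fract s 1 = Fract r 1" by (simp add: eq_fract)
    then show ?thesis using Fract by (metis in_R_Fract)
  qed
  then obtain d where d: "\<And>i. d i \<noteq> 0" "\<And>i. in_R (a $ i * Fract (d i) 1)" by metis
  define v where "v = (\<Prod>i<N. d i)"
  have "denom_bound v 1 a" unfolding denom_bound_def
  proof
    fix i
    show "in_R (a $ i * Fract v 1 ^ (i + 1))"
    proof (cases "i < N")
      case True
      then have "v = d i * (\<Prod>j\<in>{..<N} - {i}. d j)"
        unfolding v_def by (simp add: prod.remove)
      then have "a $ i * Fract v 1 ^ (i + 1) =
          (a $ i * Fract (d i) 1) * (Fract (\<Prod>j\<in>{..<N} - {i}. d j) 1 * Fract v 1 ^ i)"
        by (simp add: mult_ac)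
      also have "in_R \<dots>" using d(2) by auto
      finally show ?thesis .
    qed (use assms in simp)
  qed
  moreover have "v \<noteq> 0" unfolding v_def using d(1) by simp
  ultimately show ?thesis by blast
qed

lemma denom_bound_poly:
  assumes "\<And>i. denom_bound v k (coeff p i)" "denom_bound v 0 h"
  shows "denom_bound v k (poly p h)"
  using assms(1)
proof (induction p)
  case (pCons a p)
  have "denom_bound v k a" "\<And>i. denom_bound v k (coeff p i)"
    using pCons.prems[of 0] pCons.prems[of "Suc _"] by simp_all
  then show ?case
    using pCons.IH denom_bound_mult[OF assms(2), of k] by auto
qed simp

definition denom_bounded :: "'a::idom \<Rightarrow> 'a fract fps \<Rightarrow> bool" where
  "denom_bounded v g \<longleftrightarrow> (\<exists>k. denom_bound v k g)"

lemma denom_boundedI: "denom_bound v k f \<Longrightarrow> denom_bounded v f"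
  unfolding denom_bounded_def by auto

lemma denom_bounded_add: "denom_bounded v f \<Longrightarrow> denom_bounded v g \<Longrightarrow> denom_bounded v (f + g)"
  unfolding denom_bounded_def by (metis denom_bound_add denom_bound_mono le_add1 le_add2)

lemma denom_bounded_mult: "denom_bounded v f \<Longrightarrow> denom_bounded v g \<Longrightarrow> denom_bounded v (f * g)"
  unfolding denom_bounded_def by (metis denom_bound_mult)

lemma denom_bounded_uminus: "denom_bounded v f \<Longrightarrow> denom_bounded v (- f)"
  unfolding denom_bounded_def by (metis denom_bound_uminus)

lemma denom_bounded_diff: "denom_bounded v f \<Longrightarrow> denom_bounded v g \<Longrightarrow> denom_bounded v (f - g)"
  by (metis denom_bounded_add denom_bounded_uminus diff_conv_add_uminus)

lemma denom_bounded_0 [simp]: "denom_bounded v 0"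
  by (auto intro: denom_boundedI)

lemma denom_bounded_1 [simp]: "denom_bounded v 1"
  by (rule denom_boundedI[of _ 0]) (metis denom_bound_const fps_const_1_eq_1 fract_collapse(2))

lemma denom_bounded_X_power [simp]: "denom_bounded v (fps_X ^ n)"
  by (rule denom_boundedI[of _ 0]) (simp add: denom_bound_power)

lemma denom_bounded_shift: "denom_bounded v f \<Longrightarrow> denom_bounded v (fps_shift j f)"
  unfolding denom_bounded_def using denom_bound_shift by blast

lemma denom_bounded_coeff_pcompose:
  assumes "\<And>i. denom_bounded v (coeff p i)" "\<And>i. denom_bounded v (coeff q i)"
  shows "denom_bounded v (coeff (pcompose p q) i)"
  using coeff_pcompose_semiring_closed[of "Collect (denom_bounded v)"]
  by (auto intro: denom_bounded_add denom_bounded_mult assms)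

lemma denom_bounded_coeff_mult:
  assumes "\<And>i. denom_bounded v (coeff p i)" "\<And>i. denom_bounded v (coeff q i)"
  shows "denom_bounded v (coeff (p * q) i)"
  using coeff_mult_semiring_closed[of "Collect (denom_bounded v)"]
  by (auto intro: denom_bounded_add denom_bounded_mult assms)

lemma denom_bounded_common_weight:
  assumes "\<And>i. denom_bounded v (coeff p i)"
  shows "\<exists>K. \<forall>i. denom_bound v K (coeff p i)"
proof -
  obtain k where k: "\<And>i. denom_bound v (k i) (coeff p i)"
    using assms unfolding denom_bounded_def by metis
  have "denom_bound v (\<Sum>j\<le>degree p. k j) (coeff p i)" for i
  proof (cases "i \<le> degree p")
    case True
    then have "k i \<le> (\<Sum>j\<le>degree p. k j)" by (intro member_le_sum) auto
    then show ?thesis using denom_bound_mono[OF k[of i]] by simp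
  qed (simp add: coeff_eq_0)
  then show ?thesis by blast
qed

section \<open>Causal fixed point equations\<close>

text \<open>\<open>x - y\<close> divides \<open>p(x) - p(y)\<close>: polynomial evaluation respects congruences mod \<open>t\<^sup>n\<close>.\<close>
lemma poly_diff_dvd: "(x - y) dvd (poly p x - poly p (y::'b::comm_ring_1))"
proof (induction p)
  case (pCons a p)
  have "poly (pCons a p) x - poly (pCons a p) y = x * (poly p x - poly p y) + (x - y) * poly p y"
    by (simp add: algebra_simps)
  then show ?case using pCons.IH by (simp add: dvd_add)
qed simp

lemma fps_X_power_dvd_nth: "fps_X ^ n dvd h \<Longrightarrow> m < n \<Longrightarrow> h $ m = 0"
  by (auto simp: fps_X_power_mult_nth elim!: dvdE)

lemma fps_X_power_dvdI:
  assumes "\<And>i. i < n \<Longrightarrow> h $ i = 0"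
  shows "fps_X ^ n dvd h"
proof
  show "h = fps_X ^ n * fps_shift n h"
    by (rule fps_ext) (auto simp: fps_X_power_mult_nth assms)
qed

text \<open>If coefficient n of \<open>\<Phi> h\<close> only depends on the coefficients of h below n, and
  \<open>\<Phi>\<close> preserves a coefficientwise property P, then every fixed point of \<open>\<Phi>\<close> has P:
  by strong induction, apply \<open>\<Phi>\<close> to the truncation of the fixed point.\<close>
lemma fps_causal_fixed_point:
  fixes w :: "'b::comm_ring_1 fps" and Phi :: "'b fps \<Rightarrow> 'b fps" and P :: "nat \<Rightarrow> 'b \<Rightarrow> bool"
  assumes fixed: "Phi w = w"
    and causal: "\<And>n h h'. fps_X ^ n dvd h - h' \<Longrightarrow> Phi h $ n = Phi h' $ n"
    and stable: "\<And>h m. (\<And>n. P n (h $ n)) \<Longrightarrow> P m (Phi h $ m)"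
    and zero: "\<And>n. P n 0"
  shows "P n (w $ n)"
proof (induction n rule: less_induct)
  case (less n)
  define g where "g = fps_cutoff n w"
  have "P i (g $ i)" for i
    using less zero by (simp add: g_def)
  then have "P n (Phi g $ n)" by (rule stable)
  moreover have "fps_X ^ n dvd g - w"
    by (rule fps_X_power_dvdI) (simp add: g_def)
  then have "Phi g $ n = w $ n" using causal fixed by metis
  ultimately show ?case by simp
qed

text \<open>The equation \<open>w = A + t \<Psi>(w)\<close> is causal; if A lies in R[[t/v]] and the
  coefficients of \<open>\<Psi>\<close> in v^-1 R[[t/v]], then \<open>w \<mapsto> A + t \<Psi>(w)\<close> preserves R[[t/v]].\<close>
lemma fixed_point_denom_bound:
  fixes w A :: "'a::idom fract fps"
  assumes eq: "w = A + fps_X * poly Psi w"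
    and BA: "denom_bound v 0 A" and BPsi: "\<And>i. denom_bound v 1 (coeff Psi i)"
  shows "denom_bound v 0 w"
proof -
  define Phi where "Phi h = A + fps_X * poly Psi h" for h
  have "in_R (w $ n * Fract v 1 ^ n)" for n
  proof (rule fps_causal_fixed_point[where Phi = Phi and P = "\<lambda>n x. in_R (x * Fract v 1 ^ n)"])
    show "Phi w = w" using eq by (simp add: Phi_def)
  next
    fix n and h h' :: "'a fract fps"
    assume "fps_X ^ n dvd h - h'"
    then have "fps_X ^ n dvd poly Psi h - poly Psi h'"
      using poly_diff_dvd dvd_trans by blast
    then have "fps_X * fps_X ^ n dvd fps_X * (poly Psi h - poly Psi h')"
      by (rule mult_dvd_mono[OF dvd_refl])
    then have "fps_X ^ Suc n dvd Phi h - Phi h'"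
      by (simp add: Phi_def right_diff_distrib)
    then show "Phi h $ n = Phi h' $ n"
      using fps_X_power_dvd_nth[of "Suc n" "Phi h - Phi h'" n] by simp
  next
    fix h :: "'a fract fps" and m
    assume "\<And>n. in_R (h $ n * Fract v 1 ^ n)"
    then have "denom_bound v 0 h" by (simp add: denom_bound_def)
    then have "denom_bound v 0 (Phi h)"
      unfolding Phi_def using BA BPsi[unfolded One_nat_def]
      by (intro denom_bound_add denom_bound_X_mult denom_bound_poly)
    then show "in_R (Phi h $ m * Fract v 1 ^ m)" by (simp add: denom_bound_def)
  qed simp
  then show ?thesis by (simp add: denom_bound_def)
qed

text \<open>The general fixed point equation \<open>c z = A + t \<Psi>(z)\<close> with c \<noteq> 0 in K and data in
  R[[t/\<mu>]][1/\<mu>]: clearing the powers of \<mu> and the denominator of c and substituting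
  \<open>w = c\<^sub>1 z\<close> reduces it to the equation \<open>w = A' + t \<Psi>'(w)\<close> treated above.\<close>
lemma fixed_point_equation_denom_bound:
  fixes z A :: "'a::idom fract fps" and Psi :: "'a fract fps poly"
  assumes mu: "mu \<noteq> 0" and c: "c \<noteq> 0"
    and eq: "fps_const c * z = A + fps_X * poly Psi z"
    and BA: "denom_bounded mu A" and BPsi: "\<And>i. denom_bounded mu (coeff Psi i)"
  shows "\<exists>rho. rho \<noteq> 0 \<and> denom_bound rho 1 z"
proof -
  have "denom_bounded mu (coeff (pCons A Psi) i)" for i
    using BA BPsi by (simp add: coeff_pCons split: nat.split)
  then obtain K where K: "\<And>i. denom_bound mu K (coeff (pCons A Psi) i)"
    using denom_bounded_common_weight by blast
  have BAK: "denom_bound mu K A" and BPK: "denom_bound mu K (coeff Psi i)" for i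
    using K[of 0] K[of "Suc i"] by simp_all
  define M where "M = Fract mu 1 ^ K"
  obtain c1 c2 where cM: "c * M = Fract c1 c2" and c2: "c2 \<noteq> 0"
    by (cases "c * M") auto
  have "M \<noteq> 0" unfolding M_def by (rule Fract_power_nonzero[OF mu])
  then have c1: "c1 \<noteq> 0" using cM c by (auto simp: fract_collapse)
  define rho where "rho = mu * c1 ^ degree Psi"
  define w where "w = fps_const (Fract c1 1) * z"
  define A' where "A' = fps_const (Fract c2 1) * (fps_const M * A)"
  define Psi' where "Psi' = smult (fps_const (Fract c2 1))
      (pcompose (smult (fps_const M) Psi) [:0, fps_const (inverse (Fract c1 1)):])"
  have "w = A' + fps_X * poly Psi' w"
  proof -
    have "Fract c1 1 \<noteq> 0" using c1 by (simp add: eq_fract Zero_fract_def)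
    then have z: "fps_const (inverse (Fract c1 1)) * w = z"
      using c1 by (simp add: w_def mult.assoc[symmetric] One_fract_def eq_fract)
    then have "poly Psi' w = fps_const (Fract c2 1) * (fps_const M * poly Psi z)"
      unfolding Psi'_def by (simp only: poly_smult poly_pcompose) (simp add: mult.commute)
    then have "A' + fps_X * poly Psi' w = fps_const (Fract c2 1 * M) * (A + fps_X * poly Psi z)"
      by (simp add: A'_def algebra_simps)
    also have "\<dots> = fps_const (Fract c2 1 * (c * M)) * z"
      by (simp add: eq[symmetric] mult_ac)
    also have "Fract c2 1 * (c * M) = Fract c1 1"
      using c2 by (simp add: cM eq_fract)
    finally show ?thesis by (simp add: w_def)
  qed
  moreover have "denom_bound rho 0 A'"
    unfolding A'_def rho_def M_def
    by (intro denom_bound_const_mult denom_bound_base denom_bound_scale BAK)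
  moreover have "denom_bound rho 1 (coeff Psi' i)" for i
  proof (cases "i \<le> degree Psi")
    case True
    have "coeff Psi' i = fps_const (Fract c2 1) *
        (fps_const (inverse (Fract c1 1) ^ i) * (fps_const M * coeff Psi i))"
      by (simp add: Psi'_def coeff_pcompose_linear fps_const_power)
    moreover have "denom_bound rho 1 (fps_const (Fract c2 1) *
        (fps_const (inverse (Fract c1 1) ^ i) * (fps_const M * coeff Psi i)))"
      unfolding rho_def M_def
      by (intro denom_bound_const_mult denom_bound_divide_power denom_bound_scale BPK True c1)
    ultimately show ?thesis by simp
  qed (simp add: Psi'_def coeff_pcompose_linear coeff_eq_0)
  ultimately have "denom_bound rho 0 (fps_const (Fract c1 1) * z)"
    unfolding w_def by (rule fixed_point_denom_bound)
  then have "denom_bound (rho * c1) 1 z" by (rule denom_bound_unscale)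
  moreover have "rho * c1 \<noteq> 0" using mu c1 by (simp add: rho_def)
  ultimately show ?thesis by blast
qed

section \<open>Simple roots of polynomials over R[[t/v]]\<close>

text \<open>Expanding \<open>q(X) = q\<^sub>0 + q\<^sub>1 X + X\<^sup>2 s(X)\<close> at a simple root \<open>r = t\<^sup>N z\<close> with
  \<open>N = 1 + e\<close>, \<open>e = ord\<^sub>t q'(r)\<close>: since \<open>q'(r) \<equiv> q\<^sub>1 (mod t\<^sup>N)\<close>, the coefficient \<open>q\<^sub>1\<close> is
  \<open>t\<^sup>e (c + t v)\<close> with \<open>c \<noteq> 0\<close>, and dividing \<open>q(r) = 0\<close> by \<open>t\<^sup>N\<^sup>+\<^sup>e\<close> leaves a fixed point
  equation for z whose data are built from the coefficients of q by ring operations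
  and shifts.\<close>
lemma simple_root_fixed_point_form:
  fixes q :: "'a::idom fract fps poly" and z :: "'a fract fps"
  assumes Bq: "\<And>i. denom_bounded mu (coeff q i)"
    and root: "poly q (fps_X ^ N * z) = 0"
    and simple: "poly (pderiv q) (fps_X ^ N * z) \<noteq> 0"
    and N: "N = Suc (subdegree (poly (pderiv q) (fps_X ^ N * z)))"
  shows "\<exists>c A Psi. c \<noteq> 0 \<and> denom_bounded mu A \<and> (\<forall>i. denom_bounded mu (coeff Psi i)) \<and>
           fps_const c * z = A + fps_X * poly Psi z"
proof -
  define r where "r = fps_X ^ N * z"
  define d where "d = poly (pderiv q) r"
  define e where "e = subdegree d"
  have N: "N = Suc e" unfolding e_def d_def r_def by (rule N)
  obtain q0 q1 s where qq: "q = pCons q0 (pCons q1 s)" by (metis pCons_cases)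
  have Bq0: "denom_bounded mu q0" and Bq1: "denom_bounded mu q1"
    and Bs: "denom_bounded mu (coeff s i)" for i
    using Bq[of 0] Bq[of 1] Bq[of "Suc (Suc i)"] by (simp_all add: qq)
  define S where "S = poly s r"
  have eq0: "q0 + r * (q1 + r * S) = 0"
    using root by (simp add: qq S_def r_def)
  have "d - q1 = r * (S + poly (pderiv (pCons q1 s)) r)"
    by (simp add: d_def qq S_def pderiv_pCons algebra_simps)
  then have "fps_X ^ N dvd d - q1" by (simp add: r_def mult.assoc)
  then have q1d: "q1 $ i = d $ i" if "i < N" for i
    using fps_X_power_dvd_nth[OF _ that] by fastforce
  have q1_low: "q1 $ i = 0" if "i < e" for i
    using q1d[of i] that nth_less_subdegree_zero[of i d] by (simp add: N e_def)
  define u where "u = fps_shift e q1"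
  have q1u: "q1 = fps_X ^ e * u"
    by (rule fps_ext) (auto simp: fps_X_power_mult_nth u_def q1_low)
  define c where "c = u $ 0"
  have "d \<noteq> 0" using simple by (simp add: d_def r_def)
  then have c: "c \<noteq> 0"
    using q1d[of e] by (simp add: c_def u_def N e_def)
  define v where "v = fps_shift 1 u"
  have uv: "u = fps_const c + fps_X * v"
    by (rule fps_ext) (auto simp: c_def v_def)
  have "q0 = - (r * q1 + r * r * S)"
    using eq0 by (simp add: algebra_simps add_eq_0_iff)
  also have "\<dots> = fps_X ^ (N + e) * (-(z * u + fps_X * (z * z * S)))"
    unfolding r_def q1u N by (simp add: algebra_simps power_add)
  finally have A: "fps_shift (N + e) q0 = -(z * u + fps_X * (z * z * S))"
    by (metis fps_shift_times_fps_X_power' mult.commute)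
  define Psi where "Psi = [:0, -v:] - monom 1 2 * pcompose s [:0, fps_X ^ N:]"
  have Psi: "poly Psi z = -(v * z) - z * z * S"
    by (simp add: Psi_def poly_monom poly_pcompose S_def r_def power2_eq_square mult_ac)
  have "fps_const c * z = - fps_shift (N + e) q0 + fps_X * poly Psi z"
    unfolding A Psi uv by (simp add: algebra_simps)
  moreover have "denom_bounded mu (- fps_shift (N + e) q0)"
    by (rule denom_bounded_uminus[OF denom_bounded_shift[OF Bq0]])
  moreover have "denom_bounded mu (coeff Psi i)" for i
  proof -
    have Bv: "denom_bounded mu v"
      unfolding v_def u_def by (rule denom_bounded_shift, rule denom_bounded_shift[OF Bq1])
    have "denom_bounded mu (coeff [:0, -v:] i)"
      by (auto simp: coeff_pCons denom_bounded_uminus[OF Bv] split: nat.split)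
    moreover have "denom_bounded mu (coeff (monom 1 2 * pcompose s [:0, fps_X ^ N:]) i)"
    proof (rule denom_bounded_coeff_mult)
      fix j
      show "denom_bounded mu (coeff (monom 1 2) j)" by (auto simp: coeff_monom)
      show "denom_bounded mu (coeff (pcompose s [:0, fps_X ^ N:]) j)"
        by (rule denom_bounded_coeff_pcompose[OF Bs]) (auto simp: coeff_pCons split: nat.split)
    qed
    ultimately show ?thesis unfolding Psi_def coeff_diff by (rule denom_bounded_diff)
  qed
  ultimately show ?thesis using c by blast
qed

text \<open>Split the root as \<open>y = a + t\<^sup>N z\<close> with a polynomial in t, and
  apply the two previous lemmas to the shifted polynomial \<open>p(a + X)\<close> and the tail z.\<close>
lemma simple_root_denom_bound:
  fixes p :: "'a::idom fract fps poly" and y :: "'a fract fps"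
  assumes nu: "nu \<noteq> 0" and Bp: "\<And>i. denom_bound nu 0 (coeff p i)"
    and root: "poly p y = 0" and simple: "poly (pderiv p) y \<noteq> 0"
  shows "\<exists>rho. rho \<noteq> 0 \<and> denom_bound rho 1 y"
proof -
  define N where "N = Suc (subdegree (poly (pderiv p) y))"
  define a where "a = fps_cutoff N y"
  obtain mu0 where mu0: "mu0 \<noteq> 0" "denom_bound mu0 1 a"
    using denom_bound_finite_support[of N a] unfolding a_def by auto
  define mu where "mu = nu * mu0"
  have mu: "mu \<noteq> 0" using nu mu0 by (simp add: mu_def)
  have Ba: "denom_bound mu 1 a"
    using denom_bound_base[OF mu0(2), of nu] by (simp add: mu_def mult.commute)
  define q where "q = pcompose p [:a, 1:]"
  have Bq: "denom_bounded mu (coeff q i)" for i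
    unfolding q_def
  proof (rule denom_bounded_coeff_pcompose)
    show "denom_bounded mu (coeff p j)" for j
      unfolding mu_def by (rule denom_boundedI, rule denom_bound_base, rule Bp)
    show "denom_bounded mu (coeff [:a, 1:] j)" for j
      by (auto simp: coeff_pCons denom_boundedI[OF Ba] split: nat.split)
  qed
  define z where "z = fps_shift N (y - a)"
  have yz: "y = a + fps_X ^ N * z"
    by (rule fps_ext) (auto simp: fps_X_power_mult_nth a_def z_def)
  have "poly q (fps_X ^ N * z) = 0" and "poly (pderiv q) (fps_X ^ N * z) = poly (pderiv p) y"
    using root yz by (simp_all add: q_def poly_pcompose pderiv_pcompose pderiv_pCons)
  then obtain c A Psi where "c \<noteq> 0" "denom_bounded mu A" "\<And>i. denom_bounded mu (coeff Psi i)"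
    and "fps_const c * z = A + fps_X * poly Psi z"
    using simple_root_fixed_point_form[OF Bq, of N z] simple by (auto simp: N_def)
  then obtain rho where rho: "rho \<noteq> 0" "denom_bound rho 1 z"
    using fixed_point_equation_denom_bound[OF mu] by metis
  have "denom_bound (rho * mu) 1 (fps_X ^ N * z)"
    using denom_bound_mult[OF denom_bound_power[OF denom_bound_X] denom_bound_base[OF rho(2)]]
    by simp
  moreover have "denom_bound (rho * mu) 1 a"
    using denom_bound_base[OF Ba, of rho] by (simp add: mult.commute)
  ultimately have "denom_bound (rho * mu) 1 y"
    unfolding yz by (rule denom_bound_add[rotated])
  moreover have "rho * mu \<noteq> 0" using rho(1) mu by simp
  ultimately show ?thesis by blast
qed

section \<open>The ring B and its fraction field F\<close>

lemma power_series_t_over_iff: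
  assumes "v \<noteq> 0"
  shows "f \<in> power_series_t_over v \<longleftrightarrow> (\<exists>g. denom_bound v 0 g \<and> f = fps_to_fls g)"
proof
  assume "f \<in> power_series_t_over v"
  then obtain c where c: "\<And>n::int. fls_nth f n =
      (if n < 0 then 0 else Fract (c (nat n)) 1 / (Fract v 1) ^ (nat n))"
    unfolding power_series_t_over_def by blast
  have "f = fps_to_fls (fls_regpart f)"
    by (rule fls_eqI) (simp add: c)
  moreover have "fls_regpart f $ n * Fract v 1 ^ (n + 0) = Fract (c n) 1" for n
    using Fract_power_nonzero[OF assms, of n] by (simp add: c)
  then have "denom_bound v 0 (fls_regpart f)"
    unfolding denom_bound_def by simp
  ultimately show "\<exists>g. denom_bound v 0 g \<and> f = fps_to_fls g" by blast
next
  assume "\<exists>g. denom_bound v 0 g \<and> f = fps_to_fls g"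
  then obtain g where g: "denom_bound v 0 g" and f: "f = fps_to_fls g" by blast
  obtain c where c: "\<And>n. g $ n * Fract v 1 ^ n = Fract (c n) 1"
    using g unfolding denom_bound_def in_R_def by (metis add_0_right)
  have "g $ n = Fract (c n) 1 / Fract v 1 ^ n" for n
    using c[of n] Fract_power_nonzero[OF assms, of n] by (simp add: field_simps)
  then show "f \<in> power_series_t_over v"
    unfolding power_series_t_over_def f by (auto intro!: exI[of _ c])
qed

lemma ring_B_iff: "f \<in> ring_B \<longleftrightarrow> (\<exists>g v. v \<noteq> 0 \<and> denom_bound v 0 g \<and> f = fps_to_fls g)"
  unfolding ring_B_def using power_series_t_over_iff by blast

lemma ring_B_0: "0 \<in> ring_B"
  unfolding ring_B_iff by (intro exI[of _ 0] exI[of _ 1]) simp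

lemma ring_B_1: "1 \<in> ring_B"
  unfolding ring_B_iff by (intro exI[of _ 1] exI[of _ 1]) simp

lemma ring_B_mult:
  assumes "f \<in> ring_B" "h \<in> ring_B"
  shows "f * h \<in> ring_B"
proof -
  obtain g1 v1 g2 v2 where "v1 \<noteq> 0" "denom_bound v1 0 g1" "f = fps_to_fls g1"
    "v2 \<noteq> 0" "denom_bound v2 0 g2" "h = fps_to_fls g2"
    using assms unfolding ring_B_iff by metis
  moreover have "denom_bound (v1 * v2) 0 g2"
    using denom_bound_base[OF \<open>denom_bound v2 0 g2\<close>, of v1] by (simp add: mult.commute)
  then have "denom_bound (v1 * v2) 0 (g1 * g2)"
    using denom_bound_mult[OF denom_bound_base[OF \<open>denom_bound v1 0 g1\<close>, of v2]] by simp
  ultimately show ?thesis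
    unfolding ring_B_iff by (intro exI[of _ "g1 * g2"] exI[of _ "v1 * v2"]) (simp add: fls_times_fps_to_fls)
qed

lemma ring_B_prod: "(\<And>i. i \<in> A \<Longrightarrow> f i \<in> ring_B) \<Longrightarrow> prod f A \<in> ring_B"
  by (induction A rule: infinite_finite_induct) (auto intro: ring_B_1 ring_B_mult)

lemma field_F_0: "0 \<in> field_F"
  unfolding field_F_def using ring_B_0 ring_B_1 by force

lemma field_F_clear_denominators:
  assumes "set (coeffs p) \<subseteq> field_F"
  obtains D where "D \<noteq> 0" "\<And>i. coeff (smult D p) i \<in> ring_B"
proof -
  have "coeff p i \<in> field_F" for i
  proof (cases "p \<noteq> 0 \<and> i \<le> degree p")
    case True
    then show ?thesis using coeff_in_coeffs[of p i] assms by blast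
  qed (auto simp: coeff_eq_0 field_F_0)
  then have "\<exists>a b. coeff p i = a / b \<and> a \<in> ring_B \<and> b \<in> ring_B \<and> b \<noteq> 0" for i
    unfolding field_F_def by blast
  then obtain a b where ab: "\<And>i. coeff p i = a i / b i" "\<And>i. a i \<in> ring_B"
    "\<And>i. b i \<in> ring_B" "\<And>i. b i \<noteq> 0"
    by metis
  define D where "D = (\<Prod>i\<le>degree p. b i)"
  have "coeff (smult D p) i \<in> ring_B" for i
  proof (cases "i \<le> degree p")
    case True
    define rest where "rest = (\<Prod>j\<in>{..degree p} - {i}. b j)"
    have "D = b i * rest" unfolding D_def rest_def using True by (simp add: prod.remove)
    then have "coeff (smult D p) i = a i * rest" using ab(1)[of i] ab(4)[of i] by simp
    moreover have "rest \<in> ring_B" unfolding rest_def by (rule ring_B_prod) (use ab(3) in auto)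
    ultimately show ?thesis using ab(2) ring_B_mult by metis
  qed (simp add: coeff_eq_0 ring_B_0)
  moreover have "D \<noteq> 0" unfolding D_def using ab(4) by simp
  ultimately show ?thesis using that by blast
qed

lemma ring_B_poly_lift:
  assumes "\<And>i. coeff Q i \<in> ring_B"
  obtains nu P where "nu \<noteq> 0" "\<And>i. denom_bound nu 0 (coeff P i)" "Q = map_poly fps_to_fls P"
proof -
  obtain g v where gv: "\<And>i. v i \<noteq> 0" "\<And>i. denom_bound (v i) 0 (g i)"
    "\<And>i. coeff Q i = fps_to_fls (g i)"
    using assms unfolding ring_B_iff by metis
  define nu where "nu = (\<Prod>i\<le>degree Q. v i)"
  define P where "P = map_poly fls_regpart Q"
  have "denom_bound nu 0 (coeff P i)" for i
  proof (cases "i \<le> degree Q")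
    case True
    then have "nu = v i * (\<Prod>j\<in>{..degree Q} - {i}. v j)"
      unfolding nu_def by (simp add: prod.remove)
    then show ?thesis
      using denom_bound_base[OF gv(2)[of i]] by (simp add: P_def coeff_map_poly gv(3))
  qed (simp add: P_def coeff_map_poly coeff_eq_0)
  moreover have "Q = map_poly fps_to_fls P"
    by (rule poly_eqI) (simp add: P_def coeff_map_poly gv(3))
  moreover have "nu \<noteq> 0" unfolding nu_def using gv(1) by simp
  ultimately show ?thesis using that by blast
qed

section \<open>From Laurent series to power series\<close>

lemma rescaled_poly:
  fixes Q :: "'b::field poly"
  assumes s: "s \<noteq> 0"
  defines "Qs \<equiv> smult (s ^ degree Q) (pcompose Q [:0, inverse s:])"
  shows "coeff Qs i = (if i \<le> degree Q then s ^ (degree Q - i) * coeff Q i else 0)"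
    and "poly Qs (s * x) = s ^ degree Q * poly Q x"
    and "poly (pderiv Qs) (s * x) = s ^ degree Q * inverse s * poly (pderiv Q) x"
proof -
  show "coeff Qs i = (if i \<le> degree Q then s ^ (degree Q - i) * coeff Q i else 0)"
  proof (cases "i \<le> degree Q")
    case True
    then have "s ^ degree Q * inverse s ^ i = s ^ (degree Q - i)"
      using s by (simp add: power_diff power_inverse divide_inverse)
    then show ?thesis
      using True by (simp add: Qs_def coeff_pcompose_linear mult.assoc[symmetric])
  qed (simp add: Qs_def coeff_pcompose_linear coeff_eq_0)
  have cancel: "s * x * inverse s = x" using s by simp
  show "poly Qs (s * x) = s ^ degree Q * poly Q x"
    and "poly (pderiv Qs) (s * x) = s ^ degree Q * inverse s * poly (pderiv Q) x"
    by (simp_all add: cancel Qs_def poly_pcompose pderiv_smult pderiv_pcompose pderiv_pCons)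
qed

lemma poly_map_fps_to_fls:
  "poly (map_poly fps_to_fls p) (fps_to_fls y) = fps_to_fls (poly p y)"
  by (induction p) (auto simp: map_poly_pCons fls_times_fps_to_fls)

lemma pderiv_map_fps_to_fls:
  "pderiv (map_poly fps_to_fls p) = map_poly fps_to_fls (pderiv (p :: 'b::idom fract fps poly))"
  by (rule poly_eqI) (simp add: coeff_pderiv coeff_map_poly fls_times_fps_to_fls fps_to_fls_of_nat)

lemma laurent_root_to_power_series_root:
  fixes x :: "'a::idom fract fls" and P :: "'a fract fps poly"
  assumes BP: "\<And>i. denom_bound nu 0 (coeff P i)"
    and root: "poly (map_poly fps_to_fls P) x = 0"
    and simple: "poly (pderiv (map_poly fps_to_fls P)) x \<noteq> 0"
  obtains m y P' where "\<And>i. denom_bound nu 0 (coeff P' i)" "poly P' y = 0"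
    "poly (pderiv P') y \<noteq> 0" "x = fps_to_fls y / fls_X ^ m"
proof -
  define Q where "Q = map_poly fps_to_fls P"
  define D where "D = degree Q"
  define m where "m = nat (- fls_subdegree x)"
  define s :: "'a fract fls" where "s = fls_X ^ m"
  have s: "s \<noteq> 0" by (simp add: s_def)
  define y where "y = fls_regpart (s * x)"
  have sxy: "s * x = fps_to_fls y"
    by (rule fls_eqI) (auto simp: y_def s_def fls_X_power_times_conv_shift m_def)
  define Qs where "Qs = smult (s ^ D) (pcompose Q [:0, inverse s:])"
  define P' where "P' = map_poly fls_regpart Qs"
  have coeff_Qs: "coeff Qs i =
      fps_to_fls (if i \<le> D then fps_X ^ (m * (D - i)) * coeff P i else 0)" for i
    using rescaled_poly(1)[OF s, of Q i]
    by (simp add: Qs_def D_def Q_def coeff_map_poly s_def fls_times_fps_to_fls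
        fps_to_fls_power power_mult[symmetric] mult.commute)
  have Qs_lift: "Qs = map_poly fps_to_fls P'"
    by (rule poly_eqI) (simp add: P'_def coeff_map_poly coeff_Qs)
  have "denom_bound nu 0 (coeff P' i)" for i
    using denom_bound_mult[OF denom_bound_power[OF denom_bound_X] BP, of _ i]
    by (simp add: P'_def coeff_map_poly coeff_Qs)
  moreover have "poly P' y = 0"
  proof -
    have "fps_to_fls (poly P' y) = poly Qs (s * x)"
      by (simp add: Qs_lift sxy poly_map_fps_to_fls)
    also have "\<dots> = s ^ D * poly Q x"
      unfolding Qs_def D_def by (rule rescaled_poly(2)[OF s])
    finally show ?thesis using root by (simp add: Q_def)
  qed
  moreover have "poly (pderiv P') y \<noteq> 0"
  proof -
    have "fps_to_fls (poly (pderiv P') y) = poly (pderiv Qs) (s * x)"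
      by (simp add: Qs_lift sxy poly_map_fps_to_fls pderiv_map_fps_to_fls)
    also have "\<dots> = s ^ D * inverse s * poly (pderiv Q) x"
      unfolding Qs_def D_def by (rule rescaled_poly(3)[OF s])
    finally show ?thesis using simple s by (auto simp: Q_def)
  qed
  moreover have "x = fps_to_fls y / fls_X ^ m"
  proof -
    have "x = s * x / s" using s by simp
    then show ?thesis unfolding sxy by (simp only: s_def)
  qed
  ultimately show ?thesis using that by blast
qed

lemma denom_bound_quotient_in_field_F:
  assumes rho: "rho \<noteq> 0" and y: "denom_bound rho k y"
  shows "fps_to_fls y / fls_X ^ m \<in> field_F"
proof -
  define C where "C = Fract rho 1 ^ k"
  define num den where "num = fps_to_fls (fps_const C * y)"
    and "den = fps_to_fls (fps_const C * fps_X ^ m)"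
  have C: "C \<noteq> 0" unfolding C_def by (rule Fract_power_nonzero[OF rho])
  have "num \<in> ring_B"
    unfolding num_def ring_B_iff C_def using denom_bound_scale[OF y] rho by blast
  moreover have "denom_bound rho 0 (fps_const C * fps_X ^ m)"
    using denom_bound_mult[OF denom_bound_const denom_bound_power[OF denom_bound_X], of rho 0 "rho ^ k"]
    by (simp add: C_def Fract_power)
  then have "den \<in> ring_B"
    unfolding den_def ring_B_iff using rho by blast
  moreover have "den \<noteq> 0" using C by (simp add: den_def)
  moreover have "fps_to_fls y / fls_X ^ m = num / den"
    using C by (simp add: num_def den_def fls_times_fps_to_fls fps_to_fls_power)
  ultimately show ?thesis unfolding field_F_def by blast
qed

lemma separable_algebraic_simple_root:
  assumes "separable_algebraic_over F x"
  obtains p where "set (coeffs p) \<subseteq> F" "poly p x = 0" "poly (pderiv p) x \<noteq> 0"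
proof -
  obtain p u v where p: "set (coeffs p) \<subseteq> F" "poly p x = 0" and uv: "u * p + v * pderiv p = 1"
    using assms unfolding separable_algebraic_over_def separable_poly_over_def by blast
  have "poly (u * p + v * pderiv p) x = 1" using uv by simp
  then have "poly (pderiv p) x \<noteq> 0" using p(2) by auto
  with p that show ?thesis by blast
qed

theorem proposition5p3:
  shows "separably_closed_in (field_F :: 'a::idom fract fls set) UNIV"
  unfolding separably_closed_in_def
proof (intro ballI impI)
  fix x :: "'a fract fls"
  assume "separable_algebraic_over field_F x"
  then obtain p where pF: "set (coeffs p) \<subseteq> field_F"
    and root: "poly p x = 0" and simple: "poly (pderiv p) x \<noteq> 0"
    by (rule separable_algebraic_simple_root)
  obtain D where D: "D \<noteq> 0" "\<And>i. coeff (smult D p) i \<in> ring_B"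
    using field_F_clear_denominators[OF pF] by blast
  obtain nu P where nu: "nu \<noteq> 0" and BP: "\<And>i. denom_bound nu 0 (coeff P i)"
    and P: "smult D p = map_poly fps_to_fls P"
    using ring_B_poly_lift[OF D(2)] by blast
  have "poly (map_poly fps_to_fls P) x = 0" "poly (pderiv (map_poly fps_to_fls P)) x \<noteq> 0"
    unfolding P[symmetric] using root simple D(1) by (simp_all add: pderiv_smult)
  then obtain m y P' where "\<And>i. denom_bound nu 0 (coeff P' i)" "poly P' y = 0"
      "poly (pderiv P') y \<noteq> 0" and x: "x = fps_to_fls y / fls_X ^ m"
    using laurent_root_to_power_series_root[OF BP] by blast
  then obtain rho where "rho \<noteq> 0" "denom_bound rho 1 y"
    using simple_root_denom_bound[OF nu] by blast
  then show "x \<in> field_F"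
    unfolding x by (rule denom_bound_quotient_in_field_F)
qed

end
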